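(* Let $p$ be a prime, let $G$ be a finite $p$-group and let $C$ be a subgroup of $G$ of index $p$. Then for every $g \in G \setminus C$ we have $\log_p |G'| \leq b(g) + \log_p |C'|$.
   Context: $G'$ and $C'$ denote the derived subgroups of $G$ and $C$. For $g$ in a finite $p$-group $G$, the breadth $b(g)$ is defined by $|G : C_G(g)| = p^{b(g)}$, where $C_G(g)$ is the centralizer of $g$ in $G$. *)

theory Defs
  imports "HOL-Algebra.Algebra" Complex_Main
begin

definition centralizer :: "('a, 'b) monoid_scheme \<Rightarrow> 'a \<Rightarrow> 'a set" where
  "centralizer G g = {x \<in> carrier G. x \<otimes>\<^bsub>G\<^esub> g = g \<otimes>\<^bsub>G\<^esub> x}"

definition breadth :: "('a, 'b) monoid_scheme \<Rightarrow> nat \<Rightarrow> 'a \<Rightarrow> nat" where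
  "breadth G p g = (THE b. card (rcosets\<^bsub>G\<^esub> (centralizer G g)) = p ^ b)"

end

theory Submission
  imports Defs "HOL-Computational_Algebra.Primes"
begin

text \<open>
  A subgroup \<open>C\<close> of index \<open>p\<close> in a \<open>p\<close>-group is normal and maximal, so \<open>G\<close> is generated
  by \<open>C\<close> and \<open>g\<close>. Let \<open>K = {[c, g] | c \<in> C}\<close>. Commutator identities show that \<open>M = C' K\<close>
  is a normal subgroup of \<open>G\<close>; the generators \<open>C \<union> {g}\<close> commute pairwise modulo \<open>M\<close>,
  hence \<open>G' \<subseteq> M\<close> and \<open>|G'| \<le> |C'| |K|\<close>. Finally \<open>[c, g] = (c g c\<inverse>) g\<inverse>\<close>, so \<open>|K|\<close>
  is at most the size of the conjugacy class of \<open>g\<close>, which is \<open>|G : C\<^sub>G(g)| = p\<^bsup>b(g)\<^esup>\<close>.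
\<close>

section \<open>Commutators and generating sets\<close>

definition commutator :: "('a, 'b) monoid_scheme \<Rightarrow> 'a \<Rightarrow> 'a \<Rightarrow> 'a" where
  "commutator G a b = a \<otimes>\<^bsub>G\<^esub> b \<otimes>\<^bsub>G\<^esub> inv\<^bsub>G\<^esub> a \<otimes>\<^bsub>G\<^esub> inv\<^bsub>G\<^esub> b"

context group
begin

lemma m_inv_cancel_left: "x \<in> carrier G \<Longrightarrow> y \<in> carrier G \<Longrightarrow> x \<otimes> (inv x \<otimes> y) = y"
  by (simp add: m_assoc[symmetric])

lemma inv_m_cancel_left: "x \<in> carrier G \<Longrightarrow> y \<in> carrier G \<Longrightarrow> inv x \<otimes> (x \<otimes> y) = y"
  by (simp add: m_assoc[symmetric])

lemmas commutator_simps =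
  commutator_def m_assoc inv_mult_group m_inv_cancel_left inv_m_cancel_left

lemma commutator_closed [intro, simp]:
  "a \<in> carrier G \<Longrightarrow> b \<in> carrier G \<Longrightarrow> commutator G a b \<in> carrier G"
  by (simp add: commutator_def)

lemma commutator_in_derived:
  "H \<subseteq> carrier G \<Longrightarrow> a \<in> H \<Longrightarrow> b \<in> H \<Longrightarrow> commutator G a b \<in> derived G H"
  unfolding derived_def commutator_def by (rule generate.incl) blast

lemma commutator_swap:
  "a \<in> carrier G \<Longrightarrow> b \<in> carrier G \<Longrightarrow> commutator G b a = inv (commutator G a b)"
  by (simp add: commutator_simps)

lemma commutator_self: "a \<in> carrier G \<Longrightarrow> commutator G a a = \<one>"
  by (simp add: commutator_simps)

lemma commutator_one_left: "b \<in> carrier G \<Longrightarrow> commutator G \<one> b = \<one>"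
  by (simp add: commutator_simps)

lemma commutator_mult_left:
  "a \<in> carrier G \<Longrightarrow> b \<in> carrier G \<Longrightarrow> y \<in> carrier G \<Longrightarrow>
   commutator G (a \<otimes> b) y = a \<otimes> commutator G b y \<otimes> inv a \<otimes> commutator G a y"
  by (simp add: commutator_simps)

lemma commutator_mult_commutator:
  "a \<in> carrier G \<Longrightarrow> b \<in> carrier G \<Longrightarrow> g \<in> carrier G \<Longrightarrow>
   commutator G a g \<otimes> commutator G b g
     = inv (commutator G b (commutator G a g)) \<otimes> commutator G (b \<otimes> a) g"
  by (simp add: commutator_simps)

lemma conj_m_distrib:
  "x \<in> carrier G \<Longrightarrow> a \<in> carrier G \<Longrightarrow> b \<in> carrier G \<Longrightarrow>
   x \<otimes> (a \<otimes> b) \<otimes> inv x = (x \<otimes> a \<otimes> inv x) \<otimes> (x \<otimes> b \<otimes> inv x)"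
  by (simp add: m_assoc inv_m_cancel_left)

lemma conj_eq_commutator_mult:
  "c \<in> carrier G \<Longrightarrow> k \<in> carrier G \<Longrightarrow> c \<otimes> k \<otimes> inv c = commutator G c k \<otimes> k"
  by (simp add: commutator_simps)

lemma conj_commutator_right:
  "x \<in> carrier G \<Longrightarrow> a \<in> carrier G \<Longrightarrow>
   x \<otimes> commutator G a x \<otimes> inv x = commutator G (x \<otimes> a \<otimes> inv x) x"
  by (simp add: commutator_simps)

lemma finite_subgroupI:
  assumes "finite (carrier G)" and "H \<subseteq> carrier G" and "\<one> \<in> H"
    and mult: "\<And>a b. a \<in> H \<Longrightarrow> b \<in> H \<Longrightarrow> a \<otimes> b \<in> H"
  shows "subgroup H G"
proof (rule subgroupI)
  fix a assume a: "a \<in> H"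
  with \<open>H \<subseteq> carrier G\<close> have aG: "a \<in> carrier G" by blast
  have powers: "a [^] (n::nat) \<in> H" for n
    by (induction n) (use \<open>\<one> \<in> H\<close> a mult in \<open>auto simp: nat_pow_Suc\<close>)
  \<comment> \<open>in a finite group the inverse is a positive power\<close>
  have "order G > 0"
    using assms(1) aG unfolding order_def by (auto simp: card_gt_0_iff)
  then have "a [^] (order G - 1) \<otimes> a = \<one>"
    using pow_order_eq_1[OF aG] by (metis Suc_diff_1 nat_pow_Suc)
  then have "inv a = a [^] (order G - 1)"
    using aG by (metis inv_equality nat_pow_closed)
  then show "inv a \<in> H" using powers by simp
qed (use assms in blast)+

lemma normal_if_generators_normalize:
  assumes "finite (carrier G)" and "subgroup N G"
    and "S \<subseteq> carrier G" and "generate G S = carrier G"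
    and normalizes: "\<And>s n. s \<in> S \<Longrightarrow> n \<in> N \<Longrightarrow> s \<otimes> n \<otimes> inv s \<in> N"
  shows "N \<lhd> G"
proof -
  have NG: "N \<subseteq> carrier G" using subgroup.subset[OF \<open>subgroup N G\<close>] .
  define T where "T = {x \<in> carrier G. \<forall>n\<in>N. x \<otimes> n \<otimes> inv x \<in> N}"
  have "subgroup T G"
  proof (rule finite_subgroupI[OF \<open>finite (carrier G)\<close>])
    fix a b assume "a \<in> T" "b \<in> T"
    then have "a \<otimes> (b \<otimes> n \<otimes> inv b) \<otimes> inv a \<in> N" if "n \<in> N" for n
      using that unfolding T_def by blast
    moreover have "a \<otimes> (b \<otimes> n \<otimes> inv b) \<otimes> inv a = a \<otimes> b \<otimes> n \<otimes> inv (a \<otimes> b)"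
      if "n \<in> N" for n
      using that \<open>a \<in> T\<close> \<open>b \<in> T\<close> NG unfolding T_def by (auto simp: m_assoc inv_mult_group)
    ultimately show "a \<otimes> b \<in> T"
      using \<open>a \<in> T\<close> \<open>b \<in> T\<close> unfolding T_def by auto
  qed (use NG in \<open>auto simp: T_def\<close>)
  moreover have "S \<subseteq> T" using normalizes \<open>S \<subseteq> carrier G\<close> unfolding T_def by blast
  ultimately have "T = carrier G"
    using generate_subgroup_incl \<open>generate G S = carrier G\<close> unfolding T_def by blast
  then show ?thesis
    using normal_inv_iff \<open>subgroup N G\<close> unfolding T_def by blast
qed

lemma derived_subset_if_generators_commute:
  assumes "finite (carrier G)" and "M \<lhd> G"
    and "S \<subseteq> carrier G" and "generate G S = carrier G"
    and commute: "\<And>s t. s \<in> S \<Longrightarrow> t \<in> S \<Longrightarrow> commutator G s t \<in> M"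
  shows "derived G (carrier G) \<subseteq> M"
proof -
  interpret M: normal M G by fact
  define V where "V y = {x \<in> carrier G. commutator G x y \<in> M}" for y
  have V_carrier: "V y = carrier G" if y: "y \<in> carrier G" and "S \<subseteq> V y" for y
  proof -
    have "subgroup (V y) G"
    proof (rule finite_subgroupI[OF \<open>finite (carrier G)\<close>])
      fix a b assume a: "a \<in> V y" and b: "b \<in> V y"
      then have "a \<otimes> commutator G b y \<otimes> inv a \<otimes> commutator G a y \<in> M"
        using M.inv_op_closed2 unfolding V_def by auto
      then show "a \<otimes> b \<in> V y"
        using a b y commutator_mult_left[of a b y] unfolding V_def by auto
    qed (use y commutator_one_left in \<open>auto simp: V_def\<close>)
    then show ?thesis
      using generate_subgroup_incl[OF \<open>S \<subseteq> V y\<close>] \<open>generate G S = carrier G\<close>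
      unfolding V_def by blast
  qed
  have swap: "commutator G y x \<in> M" if "commutator G x y \<in> M" "x \<in> carrier G" "y \<in> carrier G" for x y
    using that commutator_swap[of x y] by simp
  have "V s = carrier G" if "s \<in> S" for s
    using that assms(3) commute by (intro V_carrier) (auto simp: V_def)
  then have "S \<subseteq> V y" if "y \<in> carrier G" for y
    using that assms(3) swap unfolding V_def by blast
  then have "V y = carrier G" if "y \<in> carrier G" for y
    using that V_carrier by blast
  then have "derived_set G (carrier G) \<subseteq> M"
    unfolding V_def commutator_def by blast
  then show ?thesis
    unfolding derived_def by (rule generate_subgroup_incl[OF _ M.subgroup_axioms])
qed

end

section \<open>Subgroups of prime index in \<open>p\<close>-groups\<close>

lemma (in group_action) p_dvd_card_orbit:
  fixes p :: nat
  assumes "Factorial_Ring.prime p" and "order G = p ^ n"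
    and "x \<in> E" and "finite (orbit G \<phi> x)" and "g \<in> carrier G" and "\<phi> g x \<noteq> x"
  shows "p dvd card (orbit G \<phi> x)"
proof -
  have "card (orbit G \<phi> x) dvd p ^ n"
    using orbit_stabilizer_theorem[OF assms(3)] assms(2) by (metis dvd_triv_left)
  then obtain k where k: "card (orbit G \<phi> x) = p ^ k"
    using divides_primepow_nat[OF assms(1)] by blast
  have "{x, \<phi> g x} \<subseteq> orbit G \<phi> x"
    using orbit_refl[OF assms(3)] assms(5) unfolding orbit_def by auto
  then have "card (orbit G \<phi> x) \<ge> card {x, \<phi> g x}"
    using assms(4) by (rule card_mono[rotated])
  then have "k \<noteq> 0" using k assms(6) by (cases k) auto
  then show ?thesis using k by (simp add: dvd_power)
qed

lemma (in group_action) card_invariant_subset_mod_fixed_points: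
  fixes p :: nat
  assumes "Factorial_Ring.prime p" and "order G = p ^ n"
    and "R \<subseteq> E" and "finite R"
    and invariant: "\<And>g x. g \<in> carrier G \<Longrightarrow> x \<in> R \<Longrightarrow> \<phi> g x \<in> R"
  shows "card R mod p = card {x \<in> R. \<forall>g \<in> carrier G. \<phi> g x = x} mod p"
proof -
  interpret group G using group_hom group_hom.axioms(1) by blast
  define F where "F = {x \<in> R. \<forall>g \<in> carrier G. \<phi> g x = x}"
  have orbit_fixed: "orbit G \<phi> x = {x}" if "x \<in> F" for x
    using that one_closed unfolding F_def orbit_def by force
  have orbit_moved: "orbit G \<phi> x \<subseteq> R - F" if x: "x \<in> R - F" for x
  proof
    fix y assume y: "y \<in> orbit G \<phi> x"
    then have "y \<in> R" using x invariant unfolding orbit_def by auto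
    moreover have "y \<notin> F"
    proof
      assume "y \<in> F"
      then have "x \<in> orbit G \<phi> y"
        using orbit_sym y x \<open>y \<in> R\<close> \<open>R \<subseteq> E\<close> unfolding F_def by blast
      with \<open>y \<in> F\<close> x show False using orbit_fixed by auto
    qed
    ultimately show "y \<in> R - F" by blast
  qed
  have p_dvd_orbit: "p dvd card (orbit G \<phi> x)" if x: "x \<in> R - F" for x
    using p_dvd_card_orbit[OF assms(1,2)] orbit_moved[OF x] \<open>finite R\<close> \<open>R \<subseteq> E\<close> x
    unfolding F_def by (blast intro: finite_subset)
  have "R - F = \<Union> (orbit G \<phi> ` (R - F))"
    using orbit_moved orbit_refl \<open>R \<subseteq> E\<close> by blast
  moreover have "pairwise disjnt (orbit G \<phi> ` (R - F))"
    using disjoint_union \<open>R \<subseteq> E\<close>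
    unfolding pairwise_def disjnt_def orbits_def by blast
  moreover have "finite Orb" if "Orb \<in> orbit G \<phi> ` (R - F)" for Orb
    using that orbit_moved \<open>finite R\<close> finite_subset by blast
  ultimately have "card (R - F) = (\<Sum>Orb \<in> orbit G \<phi> ` (R - F). card Orb)"
    by (metis card_Union_disjoint)
  then have "p dvd card (R - F)"
    using p_dvd_orbit by (auto intro: dvd_sum)
  moreover have "card R = card F + card (R - F)"
  proof -
    have "F \<subseteq> R" unfolding F_def by blast
    then show ?thesis
      using card_Un_disjoint[of F "R - F"] \<open>finite R\<close> finite_subset[of F R]
      by (simp add: Un_absorb1)
  qed
  ultimately show ?thesis unfolding F_def by (auto elim!: dvdE)
qed

context group
begin

lemma subgroup_of_prime_index_maximal:
  fixes p :: nat
  assumes "finite (carrier G)" and "Factorial_Ring.prime p"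
    and "subgroup C G" and "card (rcosets C) = p"
    and "subgroup H G" and "C \<subseteq> H" and "x \<in> H" and "x \<notin> C"
  shows "H = carrier G"
proof -
  define index_HC where "index_HC = card (rcosets\<^bsub>G\<lparr>carrier := H\<rparr>\<^esub> C)"
  have "finite H" using assms(1,5) subgroup.subset finite_subset by blast
  have "card C > 0" using assms(1,3) subgroup.finite_imp_card_positive by blast
  have "card C < card H"
    using assms(6-8) \<open>finite H\<close> by (intro psubset_card_mono) auto
  have "subgroup C (G\<lparr>carrier := H\<rparr>)" by (rule subgroup_incl[OF assms(3,5,6)])
  then have HC: "index_HC * card C = card H"
    using group.lagrange[OF subgroup.subgroup_is_group[OF assms(5) is_group]]
    unfolding index_HC_def by (simp add: order_def)
  then have "index_HC \<noteq> 1" using \<open>card C < card H\<close> by auto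
  have "(card (rcosets H) * index_HC) * card C = p * card C"
    using lagrange[OF assms(5)] lagrange[OF assms(3)] assms(4) HC by (simp add: mult.assoc)
  then have "card (rcosets H) * index_HC = p"
    using \<open>card C > 0\<close> by simp
  then have "card (rcosets H) = 1"
    using prime_product[of "card (rcosets H)" index_HC] \<open>index_HC \<noteq> 1\<close> assms(2) by auto
  then have "card H = card (carrier G)" using lagrange[OF assms(5)] by (simp add: order_def)
  then show ?thesis
    using card_subset_eq[OF assms(1) subgroup.subset[OF assms(5)]] by blast
qed

lemma generate_insert_of_prime_index:
  fixes p :: nat
  assumes "finite (carrier G)" and "Factorial_Ring.prime p"
    and "subgroup C G" and "card (rcosets C) = p"
    and "x \<in> carrier G" and "x \<notin> C"
  shows "generate G (insert x C) = carrier G"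
proof -
  have "insert x C \<subseteq> carrier G" using assms(3,5) subgroup.subset by blast
  then show ?thesis
    using subgroup_of_prime_index_maximal[OF assms(1-4) generate_is_subgroup]
      generate.incl[of _ "insert x C" G] assms(6) by blast
qed

lemma conj_rcoset:
  assumes "subgroup C G" and "c \<in> C" and "x \<in> carrier G"
  shows "c <# (C #> x) #> inv c = C #> (x \<otimes> inv c)"
proof -
  have "C \<subseteq> carrier G" and "c \<in> carrier G"
    using assms(1,2) subgroup.subset by blast+
  then have "c <# (C #> x) #> inv c = (c <# C) #> x #> inv c"
    using coset_assoc assms(3) by simp
  also have "c <# C = C" using coset_join3[OF \<open>c \<in> carrier G\<close> assms(1,2)] .
  finally show ?thesis
    using coset_mult_assoc \<open>C \<subseteq> carrier G\<close> \<open>c \<in> carrier G\<close> assms(3) by simp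
qed

lemma p_dvd_card_conj_fixed_rcosets:
  fixes p :: nat
  assumes "Factorial_Ring.prime p" and "order G = p ^ n"
    and "subgroup C G" and "card (rcosets C) = p"
  shows "p dvd card {W \<in> rcosets C. \<forall>c \<in> C. c <# W #> inv c = W}"
proof -
  define E where "E = {H. H \<subseteq> carrier G}"
  define conj where "conj = (\<lambda>g. \<lambda>H \<in> E. g <# H #> inv g)"
  have CG: "C \<subseteq> carrier G" using assms(3) subgroup.subset by blast
  interpret conj_action: group_action "G\<lparr>carrier := C\<rparr>" E conj
    using group_action.induced_action[OF action_by_conjugation_on_power_set assms(3)]
    unfolding conj_def E_def .
  have "rcosets C \<subseteq> E"
    unfolding E_def RCOSETS_def using r_coset_subset_G[OF CG] by blast
  then have conj_eq: "conj c W = c <# W #> inv c" if "W \<in> rcosets C" for c W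
    using that unfolding conj_def by auto
  have "card C dvd p ^ n" using lagrange[OF assms(3)] assms(2) by (metis dvd_triv_right)
  then obtain m where "order (G\<lparr>carrier := C\<rparr>) = p ^ m"
    using divides_primepow_nat[OF assms(1)] unfolding order_def by auto
  moreover have "finite (rcosets C)"
    using assms(4) prime_gt_0_nat[OF assms(1)] card_gt_0_iff by blast
  moreover have "conj c W \<in> rcosets C" if "c \<in> C" "W \<in> rcosets C" for c W
  proof -
    obtain x where "x \<in> carrier G" "W = C #> x" using \<open>W \<in> rcosets C\<close> unfolding RCOSETS_def by blast
    moreover have "x \<otimes> inv c \<in> carrier G" using \<open>x \<in> carrier G\<close> \<open>c \<in> C\<close> CG by blast
    ultimately show ?thesis
      using conj_rcoset[OF assms(3) \<open>c \<in> C\<close>] conj_eq[OF \<open>W \<in> rcosets C\<close>]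
      unfolding RCOSETS_def by auto
  qed
  ultimately have "card (rcosets C) mod p = card {W \<in> rcosets C. \<forall>c \<in> C. conj c W = W} mod p"
    using conj_action.card_invariant_subset_mod_fixed_points[OF assms(1)] \<open>rcosets C \<subseteq> E\<close> by simp
  also have "{W \<in> rcosets C. \<forall>c \<in> C. conj c W = W} = {W \<in> rcosets C. \<forall>c \<in> C. c <# W #> inv c = W}"
    using conj_eq by auto
  finally show ?thesis using assms(4) by (simp add: mod_eq_0_iff_dvd)
qed

lemma normalizing_element_outside_prime_index:
  fixes p :: nat
  assumes "Factorial_Ring.prime p" and "order G = p ^ n"
    and "subgroup C G" and "card (rcosets C) = p"
  obtains x where "x \<in> carrier G" and "x \<notin> C" and "\<And>c. c \<in> C \<Longrightarrow> x \<otimes> c \<otimes> inv x \<in> C"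
proof -
  define F where "F = {W \<in> rcosets C. \<forall>c \<in> C. c <# W #> inv c = W}"
  have CG: "C \<subseteq> carrier G" using assms(3) subgroup.subset by blast
  have C_rcoset: "C #> \<one> = C" using coset_mult_one[OF CG] .
  have "c <# C #> inv c = C" if "c \<in> C" for c
    using conj_rcoset[OF assms(3) that one_closed] subgroup.m_inv_closed[OF assms(3) that]
      subgroup.rcos_const[OF assms(3) is_group] that CG C_rcoset by auto
  moreover have "C \<in> rcosets C" using C_rcoset unfolding RCOSETS_def by force
  ultimately have "C \<in> F" unfolding F_def by blast
  moreover have "finite F"
    using assms(4) prime_gt_0_nat[OF assms(1)] card_gt_0_iff unfolding F_def by force
  ultimately have "card F \<ge> p"
    using p_dvd_card_conj_fixed_rcosets[OF assms] unfolding F_def[symmetric]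
    by (intro dvd_imp_le) (auto simp: card_gt_0_iff)
  then have "\<not> F \<subseteq> {C}"
    using prime_ge_2_nat[OF assms(1)] card_mono[of "{C}" F] by auto
  then obtain W where "W \<in> F" "W \<noteq> C" by blast
  then obtain x where x: "x \<in> carrier G" "W = C #> x" unfolding F_def RCOSETS_def by blast
  have "x \<notin> C"
    using \<open>W \<noteq> C\<close> x subgroup.rcos_const[OF assms(3) is_group] by blast
  moreover have "x \<otimes> c \<otimes> inv x \<in> C" if c: "c \<in> C" for c
  proof -
    have "inv c \<in> C" using subgroup.m_inv_closed[OF assms(3) c] .
    then have "inv c <# W #> inv (inv c) = W" using \<open>W \<in> F\<close> unfolding F_def by blast
    then have "C #> (x \<otimes> c) = C #> x"
      using conj_rcoset[OF assms(3) \<open>inv c \<in> C\<close> x(1)] inv_inv[of c] c CG x(2) by auto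
    then have "x \<otimes> c \<in> C #> x"
      using rcos_self[OF _ assms(3), of "x \<otimes> c"] x(1) c CG by auto
    then show ?thesis by (rule subgroup.rcos_module_imp[OF assms(3) is_group x(1)])
  qed
  ultimately show ?thesis using that x(1) by blast
qed

lemma subgroup_of_prime_index_normal:
  fixes p :: nat
  assumes "finite (carrier G)" and "Factorial_Ring.prime p" and "order G = p ^ n"
    and "subgroup C G" and "card (rcosets C) = p"
  shows "C \<lhd> G"
proof -
  obtain x where x: "x \<in> carrier G" "x \<notin> C" and normalizes: "\<And>c. c \<in> C \<Longrightarrow> x \<otimes> c \<otimes> inv x \<in> C"
    using normalizing_element_outside_prime_index[OF assms(2-5)] by blast
  have "c \<otimes> c' \<otimes> inv c \<in> C" if "c \<in> C" "c' \<in> C" for c c'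
    using that assms(4) by (simp add: subgroup.m_closed subgroup.m_inv_closed)
  then show ?thesis
    using normal_if_generators_normalize[OF assms(1,4) _ generate_insert_of_prime_index[OF assms(1,2,4,5) x]]
      normalizes x(1) subgroup.subset[OF assms(4)]
    by blast
qed

end

section \<open>Centralizers and breadth\<close>

context group
begin

lemma centralizer_eq_stabilizer:
  assumes "g \<in> carrier G"
  shows "centralizer G g = stabilizer G (\<lambda>x. \<lambda>h \<in> carrier G. x \<otimes> h \<otimes> inv x) g"
proof -
  have "x \<otimes> g \<otimes> inv x = g \<longleftrightarrow> x \<otimes> g = g \<otimes> x" if "x \<in> carrier G" for x
    using that assms by (metis inv_solve_right m_closed)
  then show ?thesis
    using assms unfolding centralizer_def stabilizer_def by auto
qed

lemma centralizer_subgroup: "g \<in> carrier G \<Longrightarrow> subgroup (centralizer G g) G"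
  using group_action.stabilizer_subgroup[OF action_by_conjugation] centralizer_eq_stabilizer
  by simp

lemma card_conjugacy_class:
  assumes "finite (carrier G)" and "g \<in> carrier G"
  shows "card ((\<lambda>x. x \<otimes> g \<otimes> inv x) ` carrier G) = card (rcosets (centralizer G g))"
proof -
  let ?conj = "\<lambda>x. \<lambda>h \<in> carrier G. x \<otimes> h \<otimes> inv x"
  have "orbit G ?conj g = (\<lambda>x. x \<otimes> g \<otimes> inv x) ` carrier G"
    using assms(2) unfolding orbit_def by auto
  then have "card ((\<lambda>x. x \<otimes> g \<otimes> inv x) ` carrier G) * card (centralizer G g) = order G"
    using group_action.orbit_stabilizer_theorem[OF action_by_conjugation assms(2)]
      centralizer_eq_stabilizer[OF assms(2)] by simp
  moreover have "card (rcosets (centralizer G g)) * card (centralizer G g) = order G"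
    using lagrange[OF centralizer_subgroup[OF assms(2)]] .
  moreover have "card (centralizer G g) > 0"
    using subgroup.finite_imp_card_positive[OF centralizer_subgroup[OF assms(2)] assms(1)] .
  ultimately show ?thesis by (metis mult_right_cancel neq0_conv)
qed

lemma card_commutators_le_index_centralizer:
  assumes "finite (carrier G)" and "g \<in> carrier G" and "A \<subseteq> carrier G"
  shows "card ((\<lambda>x. commutator G x g) ` A) \<le> card (rcosets (centralizer G g))"
proof -
  have "(\<lambda>x. commutator G x g) ` A \<subseteq> (\<lambda>h. h \<otimes> inv g) ` ((\<lambda>x. x \<otimes> g \<otimes> inv x) ` carrier G)"
    using assms(2,3) unfolding commutator_def by auto
  then have "card ((\<lambda>x. commutator G x g) ` A) \<le> card ((\<lambda>x. x \<otimes> g \<otimes> inv x) ` carrier G)"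
    using assms(1) by (meson card_image_le card_mono finite_imageI le_trans)
  then show ?thesis using card_conjugacy_class[OF assms(1,2)] by simp
qed

lemma card_rcosets_centralizer_eq_power_breadth:
  fixes p :: nat
  assumes "Factorial_Ring.prime p" and "order G = p ^ n" and "g \<in> carrier G"
  shows "card (rcosets (centralizer G g)) = p ^ breadth G p g"
proof -
  have "card (rcosets (centralizer G g)) dvd p ^ n"
    using lagrange[OF centralizer_subgroup[OF assms(3)]] assms(2) by (metis dvd_triv_left)
  then obtain b where b: "card (rcosets (centralizer G g)) = p ^ b"
    using divides_primepow_nat[OF assms(1)] by blast
  moreover have "p > 1" using prime_gt_1_nat[OF assms(1)] .
  ultimately have "breadth G p g = b"
    unfolding breadth_def by (intro the_equality) (auto simp: power_inject_exp)
  then show ?thesis using b by simp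
qed

end

section \<open>The subgroup \<open>C' [C, g]\<close>\<close>

definition commutators_with :: "('a, 'b) monoid_scheme \<Rightarrow> 'a set \<Rightarrow> 'a \<Rightarrow> 'a set" where
  "commutators_with G C g = (\<lambda>c. commutator G c g) ` C"

context group
begin

lemma commutator_mem_normal:
  assumes "C \<lhd> G" and "c \<in> C" and "g \<in> carrier G"
  shows "commutator G c g \<in> C"
proof -
  interpret C: normal C G by fact
  have "g \<otimes> inv c \<otimes> inv g \<in> C" using C.inv_op_closed2 assms(2,3) by simp
  then have "c \<otimes> (g \<otimes> inv c \<otimes> inv g) \<in> C" using assms(2) by simp
  then show ?thesis using assms(2,3) by (simp add: commutator_def m_assoc)
qed

lemma mem_set_mult_commutators_with:
  "m \<in> D <#> commutators_with G C g \<longleftrightarrow> (\<exists>d \<in> D. \<exists>c \<in> C. m = d \<otimes> commutator G c g)"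
  unfolding set_mult_def commutators_with_def by blast

context
  fixes C g
  assumes C: "C \<lhd> G" and g: "g \<in> carrier G"
begin

interpretation C: normal C G by (rule C)
interpretation D: normal "derived G C" G by (rule derived_is_normal[OF C])

lemma commutator_mem_derived: "c \<in> C \<Longrightarrow> c' \<in> C \<Longrightarrow> commutator G c c' \<in> derived G C"
  using commutator_in_derived[OF C.subset] .

lemma set_mult_commutators_with_subgroup:
  assumes "finite (carrier G)"
  shows "subgroup (derived G C <#> commutators_with G C g) G"
proof (rule finite_subgroupI[OF assms])
  show "derived G C <#> commutators_with G C g \<subseteq> carrier G"
    using g D.subset C.subset by (auto simp: mem_set_mult_commutators_with)
  show "\<one> \<in> derived G C <#> commutators_with G C g"
    unfolding mem_set_mult_commutators_with
    using g commutator_one_left[of g] by (intro bexI[of _ \<one>]) auto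
next
  fix a b assume "a \<in> derived G C <#> commutators_with G C g" "b \<in> derived G C <#> commutators_with G C g"
  then obtain d1 c1 d2 c2 where
    d: "d1 \<in> derived G C" "d2 \<in> derived G C" and c: "c1 \<in> C" "c2 \<in> C"
    and ab: "a = d1 \<otimes> commutator G c1 g" "b = d2 \<otimes> commutator G c2 g"
    unfolding mem_set_mult_commutators_with by blast
  define k where "k = commutator G c1 g"
  have k: "k \<in> C" using commutator_mem_normal[OF C c(1) g] unfolding k_def .
  have carrier: "d1 \<in> carrier G" "d2 \<in> carrier G" "c1 \<in> carrier G" "c2 \<in> carrier G" "k \<in> carrier G"
    using d c k by auto
  have "a \<otimes> b = (d1 \<otimes> (k \<otimes> d2 \<otimes> inv k)) \<otimes> (commutator G c1 g \<otimes> commutator G c2 g)"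
    using carrier g unfolding ab k_def by (simp add: m_assoc inv_m_cancel_left)
  also have "\<dots> = (d1 \<otimes> (k \<otimes> d2 \<otimes> inv k) \<otimes> inv (commutator G c2 k)) \<otimes> commutator G (c2 \<otimes> c1) g"
    using carrier g commutator_mult_commutator[of c1 c2 g] unfolding k_def by (simp add: m_assoc)
  finally have "a \<otimes> b = d1 \<otimes> (k \<otimes> d2 \<otimes> inv k) \<otimes> inv (commutator G c2 k) \<otimes> commutator G (c2 \<otimes> c1) g" .
  moreover have "d1 \<otimes> (k \<otimes> d2 \<otimes> inv k) \<otimes> inv (commutator G c2 k) \<in> derived G C"
    using d c k carrier D.inv_op_closed2 commutator_mem_derived by simp
  moreover have "c2 \<otimes> c1 \<in> C" using c by simp
  ultimately show "a \<otimes> b \<in> derived G C <#> commutators_with G C g"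
    unfolding mem_set_mult_commutators_with by blast
qed

lemma derived_subset_set_mult_commutators_with:
  "derived G C \<subseteq> derived G C <#> commutators_with G C g"
proof
  fix d assume "d \<in> derived G C"
  then have "d = d \<otimes> commutator G \<one> g" using g commutator_one_left by auto
  then show "d \<in> derived G C <#> commutators_with G C g"
    using \<open>d \<in> derived G C\<close> C.one_closed unfolding mem_set_mult_commutators_with by blast
qed

lemma commutators_with_subset_set_mult:
  "commutators_with G C g \<subseteq> derived G C <#> commutators_with G C g"
proof
  fix k assume "k \<in> commutators_with G C g"
  then obtain c where "c \<in> C" "k = \<one> \<otimes> commutator G c g"
    using g C.subset unfolding commutators_with_def by auto
  then show "k \<in> derived G C <#> commutators_with G C g"
    using D.one_closed unfolding mem_set_mult_commutators_with by blast
qed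

lemma set_mult_commutators_with_normal:
  assumes "finite (carrier G)" and "generate G (insert g C) = carrier G"
  shows "derived G C <#> commutators_with G C g \<lhd> G"
proof (rule normal_if_generators_normalize[OF assms(1) set_mult_commutators_with_subgroup[OF assms(1)]
      _ assms(2)])
  show "insert g C \<subseteq> carrier G" using g C.subset by blast
  fix s m assume s: "s \<in> insert g C" and "m \<in> derived G C <#> commutators_with G C g"
  then obtain d c where d: "d \<in> derived G C" and c: "c \<in> C" and m: "m = d \<otimes> commutator G c g"
    unfolding mem_set_mult_commutators_with by blast
  define k where "k = commutator G c g"
  have k: "k \<in> C" using commutator_mem_normal[OF C c g] unfolding k_def .
  have carrier: "s \<in> carrier G" "d \<in> carrier G" "c \<in> carrier G" "k \<in> carrier G"
    using s g d c k by auto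
  have "s \<otimes> m \<otimes> inv s = (s \<otimes> d \<otimes> inv s) \<otimes> (s \<otimes> k \<otimes> inv s)"
    using conj_m_distrib carrier unfolding m k_def by simp
  moreover have "s \<otimes> d \<otimes> inv s \<in> derived G C" using D.inv_op_closed2 carrier d by simp
  moreover have "(s \<otimes> d \<otimes> inv s) \<otimes> (s \<otimes> k \<otimes> inv s) \<in> derived G C <#> commutators_with G C g"
    if "s \<otimes> d \<otimes> inv s \<in> derived G C"
  proof (cases "s = g")
    case True
    have "g \<otimes> c \<otimes> inv g \<in> C" using C.inv_op_closed2 g c by simp
    then show ?thesis
      using that[unfolded True] conj_commutator_right[OF g carrier(3)]
      unfolding True k_def mem_set_mult_commutators_with by auto
  next
    case False
    then have "s \<in> C" using s by blast
    then have "s \<otimes> d \<otimes> inv s \<otimes> commutator G s k \<in> derived G C"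
      using that k commutator_mem_derived by simp
    moreover have "(s \<otimes> d \<otimes> inv s) \<otimes> (s \<otimes> k \<otimes> inv s) = (s \<otimes> d \<otimes> inv s \<otimes> commutator G s k) \<otimes> k"
      using conj_eq_commutator_mult carrier by (simp add: m_assoc)
    ultimately show ?thesis
      using c unfolding k_def mem_set_mult_commutators_with by blast
  qed
  ultimately show "s \<otimes> m \<otimes> inv s \<in> derived G C <#> commutators_with G C g" by simp
qed

lemma derived_carrier_subset_set_mult_commutators_with:
  assumes "finite (carrier G)" and "generate G (insert g C) = carrier G"
  shows "derived G (carrier G) \<subseteq> derived G C <#> commutators_with G C g"
proof (rule derived_subset_if_generators_commute[OF assms(1) set_mult_commutators_with_normal[OF assms]
      _ assms(2)])
  show "insert g C \<subseteq> carrier G" using g C.subset by blast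
  interpret M: subgroup "derived G C <#> commutators_with G C g" G
    using set_mult_commutators_with_subgroup[OF assms(1)] .
  have commutator_g: "commutator G c g \<in> derived G C <#> commutators_with G C g" if "c \<in> C" for c
    using commutators_with_subset_set_mult that unfolding commutators_with_def by blast
  fix s t assume "s \<in> insert g C" "t \<in> insert g C"
  then consider "s \<in> C" "t \<in> C" | "s \<in> C" "t = g" | "s = g" "t \<in> C" | "s = g" "t = g"
    by blast
  then show "commutator G s t \<in> derived G C <#> commutators_with G C g"
  proof cases
    case 1
    then show ?thesis using commutator_mem_derived derived_subset_set_mult_commutators_with by blast
  next
    case 2
    then show ?thesis using commutator_g by simp
  next
    case 3
    then show ?thesis using commutator_g commutator_swap[of t s] g C.subset by auto
  next
    case 4
    then show ?thesis using commutator_self g by simp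
  qed
qed

lemma card_derived_le_index_centralizer_mult:
  assumes "finite (carrier G)" and "generate G (insert g C) = carrier G"
  shows "card (derived G (carrier G)) \<le> card (rcosets (centralizer G g)) * card (derived G C)"
proof -
  let ?K = "commutators_with G C g"
  have "card (derived G (carrier G)) \<le> card (derived G C <#> ?K)"
    using derived_carrier_subset_set_mult_commutators_with[OF assms]
      set_mult_commutators_with_subgroup[OF assms(1)] assms(1)
    by (meson card_mono finite_subset subgroup.subset)
  also have "\<dots> \<le> card (derived G C) * card ?K"
  proof -
    have "derived G C <#> ?K = (\<lambda>(d, k). d \<otimes> k) ` (derived G C \<times> ?K)"
      unfolding set_mult_def by auto
    moreover have "finite (derived G C)" "finite ?K"
      using finite_subset[OF D.subset assms(1)] finite_subset[OF C.subset assms(1)]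
      unfolding commutators_with_def by auto
    ultimately show ?thesis
      by (metis card_cartesian_product card_image_le finite_cartesian_product)
  qed
  also have "\<dots> \<le> card (derived G C) * card (rcosets (centralizer G g))"
    using card_commutators_le_index_centralizer[OF assms(1) g C.subset]
    unfolding commutators_with_def by simp
  finally show ?thesis by (simp add: mult.commute)
qed

end

end

lemma log_le_add_of_le_power_mult:
  fixes b :: real
  assumes "1 < b" and "0 < x" and "0 < y" and "x \<le> b ^ n * y"
  shows "log b x \<le> real n + log b y"
proof -
  have "log b x \<le> log b (b ^ n * y)"
    using assms by (subst log_le_cancel_iff) auto
  also have "\<dots> = real n + log b y"
    using assms(1,3) by (simp add: log_mult log_nat_power)
  finally show ?thesis .
qed

theorem lemma2p1:
  fixes G (structure) and p :: nat and C :: "'a set" and g :: 'a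
  assumes "Factorial_Ring.prime p"
    and "group G" and "finite (carrier G)" and "\<exists>n. order G = p ^ n"
    and "subgroup C G" and "card (rcosets C) = p"
    and "g \<in> carrier G - C"
  shows "log (real p) (real (card (derived G (carrier G))))
           \<le> real (breadth G p g) + log (real p) (real (card (derived G C)))"
proof -
  interpret group G by fact
  obtain n where n: "order G = p ^ n" using assms(4) by blast
  have g: "g \<in> carrier G" "g \<notin> C" using assms(7) by auto
  have "C \<lhd> G" using subgroup_of_prime_index_normal[OF assms(3,1) n assms(5,6)] .
  moreover have "generate G (insert g C) = carrier G"
    using generate_insert_of_prime_index[OF assms(3,1,5,6) g] .
  ultimately have "card (derived G (carrier G)) \<le> p ^ breadth G p g * card (derived G C)"
    using card_derived_le_index_centralizer_mult[OF _ g(1) assms(3)]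
      card_rcosets_centralizer_eq_power_breadth[OF assms(1) n g(1)]
    by simp
  then have "real (card (derived G (carrier G))) \<le> real p ^ breadth G p g * real (card (derived G C))"
    by (metis of_nat_le_iff of_nat_mult of_nat_power)
  moreover have "card (derived G (carrier G)) > 0" "card (derived G C) > 0"
    using subgroup.finite_imp_card_positive[OF derived_is_subgroup assms(3)]
      subgroup.subset[OF assms(5)] by blast+
  ultimately show ?thesis
    using prime_gt_1_nat[OF assms(1)] by (intro log_le_add_of_le_power_mult) simp_all
qed

end
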